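(* Let $(f_n)_{n\ge1}$ be a bounded sequence in $\dot H^1(B^c)$ such that for every sequence of positive reals $(\lambda_n)_n$ with either $\lambda_n\to+\infty$ or $\lambda_n=1$ for all $n$, one has $\lambda_n^{1/2}(\mathcal Pf_n)(\lambda_n\cdot)\rightharpoonup0$ weakly in $\dot H^1(\mathbb R^3)$. Then, up to a subsequence, $\|f_n\|_{L^6(B^c)}\to0$.
   Context: $B^c=\mathbb R^3\setminus B(0,1)$; $\dot H^1(B^c)$ is the space of radial $f\in L^6(B^c)$ with $\nabla f\in L^2(B^c)$ (such $f$ are continuous in $r\in[1,\infty)$). The extension operator $\mathcal P:\dot H^1(B^c)\to\dot H^1_{\rm rad}(\mathbb R^3)$ is $\mathcal Pu(r)=u(r)$ for $r\ge1$ and $\mathcal Pu(r)=u(1)$ for $r<1$. *)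

theory Defs
  imports "HOL-Analysis.Analysis"
begin

text \<open>Radial functions are represented by their profile u :: real => real, u(r) = f(x) for |x| = r.
  rad_H1 S u g: u is a radial function on the region {x. |x| \<in> S} with (weak) radial
  derivative g, u is locally absolutely continuous on S, u is in L^6 and grad u in L^2
  of the region (in polar coordinates, the measure is 4 pi r^2 dr).\<close>

definition rad_H1 :: "real set \<Rightarrow> (real \<Rightarrow> real) \<Rightarrow> (real \<Rightarrow> real) \<Rightarrow> bool" where
  "rad_H1 S u g \<longleftrightarrow>
     (\<forall>x\<in>S. \<forall>y\<in>S. x \<le> y \<longrightarrow>
        set_integrable lborel {x..y} g \<and> u y - u x = (LINT t:{x..y}|lborel. g t)) \<and>
     set_integrable lborel S (\<lambda>r. \<bar>u r\<bar> ^ 6 * r\<^sup>2) \<and>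
     set_integrable lborel S (\<lambda>r. (g r)\<^sup>2 * r\<^sup>2)"

definition Hdot1_ext :: "(real \<Rightarrow> real) \<Rightarrow> (real \<Rightarrow> real) \<Rightarrow> bool" where
  "Hdot1_ext u g \<longleftrightarrow> rad_H1 {1..} u g"

definition Hdot1_rad :: "(real \<Rightarrow> real) \<Rightarrow> (real \<Rightarrow> real) \<Rightarrow> bool" where
  "Hdot1_rad u g \<longleftrightarrow> rad_H1 {0<..} u g"

definition Hdot1_ext_normsq :: "(real \<Rightarrow> real) \<Rightarrow> real" where
  "Hdot1_ext_normsq g = 4 * pi * (LINT r:{1..}|lborel. (g r)\<^sup>2 * r\<^sup>2)"

definition L6_ext_norm :: "(real \<Rightarrow> real) \<Rightarrow> real" where
  "L6_ext_norm u = (4 * pi * (LINT r:{1..}|lborel. \<bar>u r\<bar> ^ 6 * r\<^sup>2)) powr (1/6)"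

definition ext_P :: "(real \<Rightarrow> real) \<Rightarrow> real \<Rightarrow> real" where
  "ext_P u r = (if r \<ge> 1 then u r else u 1)"

text \<open>Weak convergence to 0 in \<open>\<dot>H\<^sup>1(\<real>\<^sup>3)\<close> of a sequence of radial functions:
  each v n lies in radial \<open>\<dot>H\<^sup>1\<close>, and the \<open>\<dot>H\<^sup>1\<close> inner product
  4 pi \<integral> G_n H r^2 dr against any radial test h tends to 0 (for any choice of
  the derivatives G_n, which are determined a.e.).\<close>
definition weak_zero_Hdot1 :: "(nat \<Rightarrow> real \<Rightarrow> real) \<Rightarrow> bool" where
  "weak_zero_Hdot1 v \<longleftrightarrow>
     (\<exists>G. \<forall>n. Hdot1_rad (v n) (G n)) \<and>
     (\<forall>G. (\<forall>n. Hdot1_rad (v n) (G n)) \<longrightarrow>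
        (\<forall>h H. Hdot1_rad h H \<longrightarrow>
           (\<lambda>n. 4 * pi * (LINT r:{0<..}|lborel. G n r * H r * r\<^sup>2)) \<longlonglongrightarrow> 0))"

end

theory Submission
  imports Defs "HOL-Real_Asymp.Real_Asymp"
begin

(* Testing the weak convergence against the radial profile -1/max(r,t), whose gradient is
   1_{r >= t} r^-2, turns the weak hypotheses into pointwise ones: f_n(t) -> 0 for fixed t >= 1
   (lambda_n = 1), and lambda_n^(1/2) f_n(lambda_n) -> 0 whenever lambda_n -> infinity.
   The energy bound makes the f_n uniformly Hoelder-1/2 on [1, infinity), so for any points
   rho_n >= 1 a sub-subsequence argument (either rho_n converges, or it escapes to infinity and
   serves as lambda_n) gives rho_n^(1/2) f_n(rho_n) -> 0, i.e. sup_{r >= 1} r^(1/2) |f_n(r)| -> 0.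
   Finally |f|^6 r^2 = (r^(1/2) |f|)^4 f^2 and Hardy's inequality
   int_1^infinity f^2 dr <= 4 int_1^infinity f'^2 r^2 dr bound the L^6 norm by this supremum,
   so the whole sequence tends to 0 in L^6. *)

lemma nn_integral_inverse_square_Ici:
  assumes "t > 0"
  shows "(\<integral>\<^sup>+s. ennreal (indicator {t..} s / s\<^sup>2) \<partial>lborel) = ennreal (1 / t)"
proof -
  have "(\<integral>\<^sup>+s. ennreal (1 / s\<^sup>2) * indicator {t..} s \<partial>lborel) = ennreal (0 - (- 1 / t))"
  proof (rule nn_integral_FTC_atLeast)
    show "((\<lambda>x. - 1 / x) has_real_derivative 1 / x\<^sup>2) (at x)" if "t \<le> x" for x
      using that assms by (auto intro!: derivative_eq_intros simp: power2_eq_square)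
    show "((\<lambda>x::real. - 1 / x) \<longlongrightarrow> 0) at_top"
      by real_asymp
  qed auto
  then show ?thesis
    by (simp add: indicator_mult_ennreal mult.commute)
qed

lemma integrable_inverse_square_Ici:
  assumes "t > 0"
  shows "integrable lborel (\<lambda>s. indicator {t..} s / s\<^sup>2 :: real)"
  by (rule integrableI_nn_integral_finite[OF _ _ nn_integral_inverse_square_Ici[OF assms]]) auto

lemma nn_integral_inverse_power_three_halves_Ici:
  assumes "t > 0"
  shows "(\<integral>\<^sup>+s. ennreal (indicator {t..} s / (s * sqrt s)) \<partial>lborel) = ennreal (2 / sqrt t)"
proof -
  have "(\<integral>\<^sup>+s. ennreal (1 / (s * sqrt s)) * indicator {t..} s \<partial>lborel) = ennreal (0 - (- 2 / sqrt t))"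
  proof (rule nn_integral_FTC_atLeast)
    show "((\<lambda>x. - 2 / sqrt x) has_real_derivative 1 / (x * sqrt x)) (at x)" if "t \<le> x" for x
      using that assms by (auto intro!: derivative_eq_intros simp: field_simps)
    show "0 \<le> 1 / (x * sqrt x)" if "t \<le> x" for x
      using that assms by simp
    show "((\<lambda>x::real. - 2 / sqrt x) \<longlongrightarrow> 0) at_top"
      by real_asymp
  qed auto
  then show ?thesis
    by (simp add: indicator_mult_ennreal mult.commute)
qed

lemma nn_integral_inverse_sqrt_Icc_le:
  assumes "1 \<le> s"
  shows "(\<integral>\<^sup>+r. ennreal (indicator {1..s} r * (2 / sqrt r)) \<partial>lborel) \<le> ennreal (4 * sqrt s)"
proof -
  have "(\<integral>\<^sup>+r. ennreal (2 / sqrt r) * indicator {1..s} r \<partial>lborel) = ennreal (4 * sqrt s - 4 * sqrt 1)"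
  proof (rule nn_integral_FTC_Icc)
    show "((\<lambda>x. 4 * sqrt x) has_real_derivative 2 / sqrt x) (at x)" if "x \<in> {1..s}" for x
      using that by (auto intro!: derivative_eq_intros simp: field_simps)
  qed (use assms in auto)
  then show ?thesis
    using assms by (simp add: indicator_mult_ennreal mult.commute)
qed

lemma nn_integral_inverse_square_Icc_le:
  assumes "1 \<le> a"
  shows "(\<integral>\<^sup>+s. ennreal (indicator {a..b} s / s\<^sup>2) \<partial>lborel) \<le> ennreal (b - a)"
proof -
  have "(\<integral>\<^sup>+s. ennreal (indicator {a..b} s / s\<^sup>2) \<partial>lborel) \<le> (\<integral>\<^sup>+s. indicator {a..b} s \<partial>lborel)"
  proof (intro nn_integral_mono)
    fix s :: real
    have "1 / s\<^sup>2 \<le> 1" if "s \<in> {a..b}"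
      using that assms by (simp add: one_le_power)
    then show "ennreal (indicator {a..b} s / s\<^sup>2) \<le> indicator {a..b} s"
      by (auto simp: indicator_def intro!: ennreal_leI)
  qed
  also have "\<dots> = ennreal (b - a)"
    by (cases "a \<le> b") (auto simp: ennreal_neg)
  finally show ?thesis .
qed

lemma Cauchy_Schwarz_weighted_nn_integral:
  fixes g w :: "real \<Rightarrow> real"
  assumes [measurable]: "(\<lambda>s. indicator A s * g s) \<in> borel_measurable borel"
    "A \<in> sets borel" "w \<in> borel_measurable borel"
    and w_pos: "\<And>s. s \<in> A \<Longrightarrow> w s > 0"
  shows "(\<integral>\<^sup>+s. ennreal (indicator A s * \<bar>g s\<bar>) \<partial>lborel)\<^sup>2
     \<le> (\<integral>\<^sup>+s. ennreal (indicator A s * ((g s)\<^sup>2 * w s)) \<partial>lborel) *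
        (\<integral>\<^sup>+s. ennreal (indicator A s / w s) \<partial>lborel)"
proof -
  let ?f = "\<lambda>s. ennreal (\<bar>indicator A s * g s\<bar> * sqrt (w s))"
  let ?h = "\<lambda>s. ennreal (indicator A s / sqrt (w s))"
  have "(\<integral>\<^sup>+s. ?f s * ?h s \<partial>lborel)\<^sup>2 \<le> (\<integral>\<^sup>+s. ?f s ^ 2 \<partial>lborel) * (\<integral>\<^sup>+s. ?h s ^ 2 \<partial>lborel)"
    by (rule Cauchy_Schwarz_nn_integral) measurable
  moreover have "?f s * ?h s = ennreal (indicator A s * \<bar>g s\<bar>)" for s
    using w_pos[of s] by (cases "s \<in> A") (auto simp: ennreal_mult''[symmetric] abs_mult)
  moreover have "?f s ^ 2 = ennreal (indicator A s * ((g s)\<^sup>2 * w s))" for s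
    using w_pos[of s] by (cases "s \<in> A") (auto simp: ennreal_power power_mult_distrib abs_mult)
  moreover have "?h s ^ 2 = ennreal (indicator A s / w s)" for s
    using w_pos[of s] by (cases "s \<in> A") (auto simp: ennreal_power power_divide)
  ultimately show ?thesis by simp
qed

lemma emeasure_lborel_Ici: "emeasure lborel {a::real..} = \<infinity>"
proof -
  have lower: "ennreal x \<le> emeasure lborel {a..}" if "x \<ge> 0" for x
  proof -
    have "ennreal x = emeasure lborel {a..a + x}"
      using that by simp
    also have "\<dots> \<le> emeasure lborel {a..}"
      by (intro emeasure_mono) auto
    finally show ?thesis .
  qed
  then show ?thesis
  proof (cases "emeasure lborel {a..}")
    case (real y)
    then have "ennreal (y + 1) \<le> ennreal y"
      using lower[of "y + 1"] by simp
    with real show ?thesis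
      by (simp add: ennreal_le_iff)
  qed simp
qed

lemma set_lebesgue_integral_nonneg:
  fixes f :: "'a \<Rightarrow> real"
  assumes "\<And>x. x \<in> A \<Longrightarrow> 0 \<le> f x"
  shows "0 \<le> (LINT x:A|M. f x)"
  unfolding set_lebesgue_integral_def
  using assms by (intro Bochner_Integration.integral_nonneg) (auto simp: indicator_def)

lemma nn_integral_eq_set_integral:
  fixes f :: "real \<Rightarrow> real"
  assumes "set_integrable lborel A f" "\<And>x. x \<in> A \<Longrightarrow> 0 \<le> f x"
  shows "(\<integral>\<^sup>+x. ennreal (indicator A x * f x) \<partial>lborel) = ennreal (LINT x:A|lborel. f x)"
  unfolding set_lebesgue_integral_def using assms unfolding set_integrable_def
  by (subst nn_integral_eq_integral) (auto simp: indicator_def)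

lemma abs_set_integral_le_nn_integral:
  fixes g :: "real \<Rightarrow> real"
  assumes "set_integrable lborel A g"
  shows "ennreal \<bar>LINT s:A|lborel. g s\<bar> \<le> (\<integral>\<^sup>+s. ennreal (indicator A s * \<bar>g s\<bar>) \<partial>lborel)"
proof -
  have "ennreal (norm (LINT s:A|lborel. g s)) \<le> (\<integral>\<^sup>+s. ennreal (norm (indicator A s *\<^sub>R g s)) \<partial>lborel)"
    unfolding set_lebesgue_integral_def
    by (rule integral_norm_bound_ennreal) (use assms in \<open>simp add: set_integrable_def\<close>)
  then show ?thesis
    by (simp add: abs_mult)
qed

lemma LIMSEQ_if_subseqs_have_LIMSEQ_subseq:
  fixes x :: "nat \<Rightarrow> 'a::metric_space"
  assumes "\<And>\<phi> :: nat \<Rightarrow> nat. strict_mono \<phi> \<Longrightarrow> \<exists>\<psi>. strict_mono \<psi> \<and> (\<lambda>k. x (\<phi> (\<psi> k))) \<longlonglongrightarrow> L"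
  shows "x \<longlonglongrightarrow> L"
proof (rule ccontr)
  assume "\<not> x \<longlonglongrightarrow> L"
  then obtain e where "e > 0" and "\<exists>\<^sub>F n in sequentially. e \<le> dist (x n) L"
    unfolding tendsto_iff by (auto simp: not_eventually not_less)
  then have "infinite {n. e \<le> dist (x n) L}"
    by (simp add: frequently_sequentially infinite_nat_iff_unbounded_le)
  then obtain \<phi> :: "nat \<Rightarrow> nat" where "strict_mono \<phi>" and far: "\<And>k. e \<le> dist (x (\<phi> k)) L"
    using infinite_enumerate by blast
  then obtain \<psi> where "(\<lambda>k. x (\<phi> (\<psi> k))) \<longlonglongrightarrow> L"
    using assms[OF \<open>strict_mono \<phi>\<close>] by blast
  then have "\<forall>\<^sub>F k in sequentially. dist (x (\<phi> (\<psi> k))) L < e"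
    using \<open>e > 0\<close> by (rule tendstoD)
  then obtain k where "dist (x (\<phi> (\<psi> k))) L < e"
    by (auto simp: eventually_sequentially)
  with far[of "\<psi> k"] show False
    by simp
qed

lemma subseq_tendsto_or_at_top:
  fixes x :: "nat \<Rightarrow> real"
  assumes "\<And>n. a \<le> x n"
  obtains (tendsto) \<sigma> l where "strict_mono \<sigma>" "(\<lambda>k. x (\<sigma> k)) \<longlonglongrightarrow> l"
    | (at_top) \<sigma> where "strict_mono \<sigma>" "filterlim (\<lambda>k. x (\<sigma> k)) at_top sequentially"
proof -
  obtain \<sigma> where "strict_mono \<sigma>" and "monoseq (\<lambda>k. x (\<sigma> k))"
    using seq_monosub by blast
  then consider "decseq (\<lambda>k. x (\<sigma> k))" | "incseq (\<lambda>k. x (\<sigma> k))"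
    unfolding monoseq_iff by blast
  then show thesis
  proof cases
    case 1
    then show thesis
      using decseq_convergent[of "\<lambda>k. x (\<sigma> k)" a] assms \<open>strict_mono \<sigma>\<close> tendsto by blast
  next
    case 2
    show thesis
    proof (cases "\<exists>B. \<forall>k. x (\<sigma> k) \<le> B")
      case True
      then show thesis
        using incseq_convergent[of "\<lambda>k. x (\<sigma> k)"] 2 \<open>strict_mono \<sigma>\<close> tendsto by blast
    next
      case False
      have "\<forall>\<^sub>F k in sequentially. Z \<le> x (\<sigma> k)" for Z
      proof -
        obtain k0 where "Z \<le> x (\<sigma> k0)"
          using False by (meson linorder_le_cases)
        then show ?thesis
          using 2 by (auto simp: eventually_sequentially incseq_def intro: order_trans)
      qed
      then show thesis
        using \<open>strict_mono \<sigma>\<close> at_top by (simp add: filterlim_at_top)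
    qed
  qed
qed

lemma filterlim_at_top_subseq_extend:
  fixes x y :: "nat \<Rightarrow> 'a::linorder"
  assumes "strict_mono \<sigma>" "filterlim (\<lambda>k. x (\<sigma> k)) at_top sequentially"
    and "filterlim y at_top sequentially"
  shows "filterlim (\<lambda>n. if n \<in> range \<sigma> then x n else y n) at_top sequentially"
  unfolding filterlim_at_top
proof (intro allI)
  fix Z :: 'a
  obtain K where K: "\<And>k. k \<ge> K \<Longrightarrow> Z \<le> x (\<sigma> k)"
    using assms(2) unfolding filterlim_at_top eventually_sequentially by blast
  obtain N where N: "\<And>n. n \<ge> N \<Longrightarrow> Z \<le> y n"
    using assms(3) unfolding filterlim_at_top eventually_sequentially by blast
  show "\<forall>\<^sub>F n in sequentially. Z \<le> (if n \<in> range \<sigma> then x n else y n)"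
  proof (rule eventually_sequentiallyI[of "max (\<sigma> K) N"])
    fix n
    assume n: "max (\<sigma> K) N \<le> n"
    show "Z \<le> (if n \<in> range \<sigma> then x n else y n)"
    proof (cases "n \<in> range \<sigma>")
      case True
      then obtain k where "n = \<sigma> k"
        by blast
      with n have "K \<le> k"
        using strict_mono_less_eq[OF assms(1)] by auto
      then show ?thesis
        using K \<open>n = \<sigma> k\<close> by simp
    qed (use n N in simp)
  qed
qed

lemma rad_H1_measurable_Ici:
  assumes "rad_H1 S u g" "{t..} \<subseteq> S"
  shows "(\<lambda>s. indicator {t..} s * g s) \<in> borel_measurable borel"
proof (rule borel_measurable_LIMSEQ_real)
  let ?F = "\<lambda>k s. indicator {t..t + real k} s * g (s::real)"
  show "?F k \<in> borel_measurable borel" for k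
  proof -
    have "t \<in> S" "t + real k \<in> S"
      using assms(2) by auto
    then have "set_integrable lborel {t..t + real k} g"
      using assms(1) unfolding rad_H1_def by auto
    then show ?thesis
      unfolding set_integrable_def by (auto dest: borel_measurable_integrable)
  qed
  show "(\<lambda>k. ?F k s) \<longlonglongrightarrow> indicator {t..} s * g s" for s
  proof (rule tendsto_eventually)
    obtain k0 :: nat where "real k0 \<ge> s - t"
      using real_arch_simple by blast
    then show "\<forall>\<^sub>F k in sequentially. ?F k s = indicator {t..} s * g s"
      by (intro eventually_sequentiallyI[of k0]) (auto simp: indicator_def)
  qed
qed

lemma rad_H1_integrable_Ici:
  assumes R: "rad_H1 S u g" and "t > 0" and sub: "{t..} \<subseteq> S"
  shows "set_integrable lborel {t..} g"
proof -
  have [measurable]: "(\<lambda>s. indicator {t..} s * g s) \<in> borel_measurable borel"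
    by (rule rad_H1_measurable_Ici[OF R sub])
  have "set_integrable lborel S (\<lambda>r. (g r)\<^sup>2 * r\<^sup>2)"
    using R unfolding rad_H1_def by auto
  then have "set_integrable lborel {t..} (\<lambda>r. (g r)\<^sup>2 * r\<^sup>2)"
    by (rule set_integrable_subset) (use sub in auto)
  then have energy: "(\<integral>\<^sup>+s. ennreal (indicator {t..} s * ((g s)\<^sup>2 * s\<^sup>2)) \<partial>lborel) < \<infinity>"
    unfolding set_integrable_def integrable_iff_bounded by (simp add: indicator_mult_ennreal)
  have "(\<integral>\<^sup>+s. ennreal (indicator {t..} s * \<bar>g s\<bar>) \<partial>lborel)\<^sup>2
     \<le> (\<integral>\<^sup>+s. ennreal (indicator {t..} s * ((g s)\<^sup>2 * s\<^sup>2)) \<partial>lborel) *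
        (\<integral>\<^sup>+s. ennreal (indicator {t..} s / s\<^sup>2) \<partial>lborel)"
    by (rule Cauchy_Schwarz_weighted_nn_integral) (use \<open>t > 0\<close> in auto)
  also have "\<dots> < \<infinity>"
    using energy by (simp add: nn_integral_inverse_square_Ici[OF \<open>t > 0\<close>] ennreal_mult_less_top)
  finally have "(\<integral>\<^sup>+s. ennreal (indicator {t..} s * \<bar>g s\<bar>) \<partial>lborel) < \<infinity>"
    by (simp add: power_less_top_ennreal)
  then show ?thesis
    unfolding set_integrable_def integrable_iff_bounded by (simp add: abs_mult)
qed

lemma weighted_L6_limit_at_top_eq_0:
  fixes u :: "real \<Rightarrow> real"
  assumes int: "set_integrable lborel {T..} (\<lambda>r. \<bar>u r\<bar> ^ 6 * r\<^sup>2)" and lim: "(u \<longlongrightarrow> L) at_top"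
  shows "L = 0"
proof (rule ccontr)
  assume "L \<noteq> 0"
  then have "\<forall>\<^sub>F r in at_top. \<bar>L\<bar> / 2 < \<bar>u r\<bar>"
    by (intro order_tendstoD(1)[OF tendsto_rabs[OF lim]]) simp
  then obtain T' where T': "\<And>r. r \<ge> T' \<Longrightarrow> \<bar>L\<bar> / 2 < \<bar>u r\<bar>"
    by (auto simp: eventually_at_top_linorder)
  define T'' where "T'' = max T' (max T 1)"
  define c where "c = (\<bar>L\<bar> / 2) ^ 6"
  have "c > 0"
    using \<open>L \<noteq> 0\<close> by (simp add: c_def)
  have "integrable lborel (\<lambda>r. indicator {T''..} r * c)"
  proof (rule Bochner_Integration.integrable_bound[OF int[unfolded set_integrable_def]])
    show "AE r in lborel. norm (indicator {T''..} r * c) \<le> norm (indicator {T..} r *\<^sub>R (\<bar>u r\<bar> ^ 6 * r\<^sup>2))"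
    proof (rule AE_I2)
      fix r
      show "norm (indicator {T''..} r * c) \<le> norm (indicator {T..} r *\<^sub>R (\<bar>u r\<bar> ^ 6 * r\<^sup>2))"
      proof (cases "r \<ge> T''")
        case True
        then have "c \<le> \<bar>u r\<bar> ^ 6"
          unfolding c_def using T'[of r] by (intro power_mono) (auto simp: T''_def)
        also have "\<dots> \<le> \<bar>u r\<bar> ^ 6 * r\<^sup>2"
          using True by (intro mult_le_cancel_left1[THEN iffD2]) (auto simp: T''_def one_le_power)
        finally show ?thesis
          using True \<open>c > 0\<close> by (auto simp: T''_def)
      qed (use \<open>c > 0\<close> in simp)
    qed
  qed simp
  then have "integrable lborel (\<lambda>r. indicator {T''..} r * c / c)"
    by (rule integrable_divide)
  then have "integrable lborel (indicator {T''..} :: real \<Rightarrow> real)"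
    using \<open>c > 0\<close> by simp
  then show False
    by (simp add: integrable_indicator_iff emeasure_lborel_Ici)
qed

lemma rad_H1_eq_minus_integral_Ici:
  assumes R: "rad_H1 S u g" and "t > 0" and sub: "{t..} \<subseteq> S"
  shows "u t = - (LINT s:{t..}|lborel. g s)"
proof -
  have "((\<lambda>y. LINT s:{t..y}|lborel. g s) \<longlongrightarrow> (LINT s:{t..}|lborel. g s)) at_top"
    by (rule tendsto_set_lebesgue_integral_at_top[OF _ rad_H1_integrable_Ici[OF assms]]) auto
  then have "((\<lambda>y. u t + (LINT s:{t..y}|lborel. g s)) \<longlongrightarrow> u t + (LINT s:{t..}|lborel. g s)) at_top"
    by (intro tendsto_add tendsto_const)
  moreover have "\<forall>\<^sub>F y in at_top. u t + (LINT s:{t..y}|lborel. g s) = u y"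
  proof (rule eventually_at_top_linorderI[of t])
    fix y assume "t \<le> y"
    then have "u y - u t = (LINT s:{t..y}|lborel. g s)"
      using R sub unfolding rad_H1_def by auto
    then show "u t + (LINT s:{t..y}|lborel. g s) = u y"
      by simp
  qed
  ultimately have "(u \<longlongrightarrow> u t + (LINT s:{t..}|lborel. g s)) at_top"
    by (rule Lim_transform_eventually)
  moreover have "set_integrable lborel {t..} (\<lambda>r. \<bar>u r\<bar> ^ 6 * r\<^sup>2)"
    using R sub unfolding rad_H1_def by (auto intro: set_integrable_subset)
  ultimately have "u t + (LINT s:{t..}|lborel. g s) = 0"
    by (intro weighted_L6_limit_at_top_eq_0)
  then show ?thesis
    by simp
qed

lemma rad_H1_diff_sq_le:
  assumes R: "rad_H1 S u g" and "1 \<le> a" "a \<le> b" and sub: "{a..b} \<subseteq> S"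
  shows "(u b - u a)\<^sup>2 \<le> (LINT s:S|lborel. (g s)\<^sup>2 * s\<^sup>2) * (b - a)"
proof -
  define E where "E = (LINT s:S|lborel. (g s)\<^sup>2 * s\<^sup>2)"
  have "a \<in> S" "b \<in> S"
    using sub \<open>a \<le> b\<close> by auto
  then have ig: "set_integrable lborel {a..b} g" and diff: "u b - u a = (LINT s:{a..b}|lborel. g s)"
    using R \<open>a \<le> b\<close> unfolding rad_H1_def by auto
  have "set_integrable lborel S (\<lambda>r. (g r)\<^sup>2 * r\<^sup>2)"
    using R unfolding rad_H1_def by auto
  then have E_eq: "(\<integral>\<^sup>+s. ennreal (indicator S s * ((g s)\<^sup>2 * s\<^sup>2)) \<partial>lborel) = ennreal E"
    unfolding E_def by (rule nn_integral_eq_set_integral) simp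
  have "E \<ge> 0"
    unfolding E_def by (rule set_lebesgue_integral_nonneg) simp
  have [measurable]: "(\<lambda>s. indicator {a..b} s * g s) \<in> borel_measurable borel"
    using borel_measurable_integrable[OF ig[unfolded set_integrable_def]] by simp
  have "ennreal \<bar>u b - u a\<bar> ^ 2 \<le> (\<integral>\<^sup>+s. ennreal (indicator {a..b} s * \<bar>g s\<bar>) \<partial>lborel)\<^sup>2"
    unfolding diff by (intro power_mono abs_set_integral_le_nn_integral ig) simp
  also have "\<dots> \<le> (\<integral>\<^sup>+s. ennreal (indicator {a..b} s * ((g s)\<^sup>2 * s\<^sup>2)) \<partial>lborel) *
      (\<integral>\<^sup>+s. ennreal (indicator {a..b} s / s\<^sup>2) \<partial>lborel)"
    by (rule Cauchy_Schwarz_weighted_nn_integral) (use \<open>1 \<le> a\<close> in auto)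
  also have "\<dots> \<le> ennreal E * ennreal (b - a)"
  proof (intro mult_mono' nn_integral_inverse_square_Icc_le \<open>1 \<le> a\<close>)
    show "(\<integral>\<^sup>+s. ennreal (indicator {a..b} s * ((g s)\<^sup>2 * s\<^sup>2)) \<partial>lborel) \<le> ennreal E"
      unfolding E_eq[symmetric] using sub by (intro nn_integral_mono) (auto simp: indicator_def)
  qed simp_all
  finally have "ennreal ((u b - u a)\<^sup>2) \<le> ennreal (E * (b - a))"
    using \<open>E \<ge> 0\<close> \<open>a \<le> b\<close> by (simp add: ennreal_power ennreal_mult)
  then show ?thesis
    unfolding E_def[symmetric] using \<open>E \<ge> 0\<close> \<open>a \<le> b\<close> by (subst (asm) ennreal_le_iff) auto
qed

lemma rad_H1_Holder:
  assumes R: "rad_H1 {1..} u g" and "1 \<le> a" "1 \<le> b"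
  shows "\<bar>u b - u a\<bar> \<le> sqrt ((LINT s:{1..}|lborel. (g s)\<^sup>2 * s\<^sup>2) * \<bar>b - a\<bar>)"
proof -
  have "(u b - u a)\<^sup>2 \<le> (LINT s:{1..}|lborel. (g s)\<^sup>2 * s\<^sup>2) * \<bar>b - a\<bar>"
  proof (cases "a \<le> b")
    case True
    then show ?thesis
      using rad_H1_diff_sq_le[OF R \<open>1 \<le> a\<close> True] \<open>1 \<le> a\<close> by auto
  next
    case False
    then show ?thesis
      using rad_H1_diff_sq_le[OF R \<open>1 \<le> b\<close>, of a] \<open>1 \<le> b\<close> by (auto simp: power2_commute)
  qed
  then show ?thesis
    by (simp add: real_le_rsqrt)
qed

lemma rad_H1_continuous_on:
  assumes R: "rad_H1 {1..} u g"
  shows "continuous_on {1..} u"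
proof -
  define E where "E = (LINT s:{1..}|lborel. (g s)\<^sup>2 * s\<^sup>2)"
  have "E \<ge> 0"
    unfolding E_def by (rule set_lebesgue_integral_nonneg) simp
  show ?thesis
    unfolding continuous_on_iff
  proof (intro ballI allI impI)
    fix a e :: real
    assume "a \<in> {1..}" "e > 0"
    show "\<exists>d>0. \<forall>b\<in>{1..}. dist b a < d \<longrightarrow> dist (u b) (u a) < e"
    proof (intro exI[of _ "e\<^sup>2 / (E + 1)"] conjI ballI impI)
      show "e\<^sup>2 / (E + 1) > 0"
        using \<open>e > 0\<close> \<open>E \<ge> 0\<close> by simp
      fix b :: real
      assume "b \<in> {1..}" "dist b a < e\<^sup>2 / (E + 1)"
      then have "E * \<bar>b - a\<bar> < e\<^sup>2"
        using \<open>E \<ge> 0\<close> \<open>e > 0\<close>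
        by (simp add: dist_real_def field_simps)
      then have "sqrt (E * \<bar>b - a\<bar>) < e"
        using \<open>e > 0\<close> by (intro real_less_lsqrt) auto
      moreover have "\<bar>u b - u a\<bar> \<le> sqrt (E * \<bar>b - a\<bar>)"
        unfolding E_def using rad_H1_Holder[OF R] \<open>a \<in> {1..}\<close> \<open>b \<in> {1..}\<close> by auto
      ultimately show "dist (u b) (u a) < e"
        by (simp add: dist_real_def)
    qed
  qed
qed

lemma rad_H1_sq_le_tail:
  assumes R: "rad_H1 {1..} u g" and "r \<ge> 1"
  shows "ennreal ((u r)\<^sup>2) \<le>
    ennreal (2 / sqrt r) * (\<integral>\<^sup>+s. ennreal (indicator {r..} s * ((g s)\<^sup>2 * (s * sqrt s))) \<partial>lborel)"
proof -
  have sub: "{r..} \<subseteq> {1..}"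
    using \<open>r \<ge> 1\<close> by auto
  have [measurable]: "(\<lambda>s. indicator {r..} s * g s) \<in> borel_measurable borel"
    by (rule rad_H1_measurable_Ici[OF R sub])
  have "(u r)\<^sup>2 = \<bar>LINT s:{r..}|lborel. g s\<bar>\<^sup>2"
    using rad_H1_eq_minus_integral_Ici[OF R _ sub] \<open>r \<ge> 1\<close> by simp
  then have "ennreal ((u r)\<^sup>2) = ennreal \<bar>LINT s:{r..}|lborel. g s\<bar> ^ 2"
    by (simp add: ennreal_power)
  also have "\<dots> \<le> (\<integral>\<^sup>+s. ennreal (indicator {r..} s * \<bar>g s\<bar>) \<partial>lborel)\<^sup>2"
    using \<open>r \<ge> 1\<close>
    by (intro power_mono abs_set_integral_le_nn_integral rad_H1_integrable_Ici[OF R _ sub]) auto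
  also have "\<dots> \<le> (\<integral>\<^sup>+s. ennreal (indicator {r..} s * ((g s)\<^sup>2 * (s * sqrt s))) \<partial>lborel) *
      (\<integral>\<^sup>+s. ennreal (indicator {r..} s / (s * sqrt s)) \<partial>lborel)"
    by (rule Cauchy_Schwarz_weighted_nn_integral) (use \<open>r \<ge> 1\<close> in auto)
  finally show ?thesis
    using \<open>r \<ge> 1\<close> by (simp add: nn_integral_inverse_power_three_halves_Ici mult.commute)
qed

lemma nn_integral_Hardy_kernel_slice_le:
  fixes h s :: real
  assumes "0 \<le> h"
  shows "(\<integral>\<^sup>+r. ennreal (indicator {1..} r * (2 / sqrt r)) *
      ennreal ((if r \<le> s then 1 else 0) * (h * (s * sqrt s))) \<partial>lborel)
    \<le> 4 * ennreal (indicator {1..} s * (h * s\<^sup>2))"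
proof (cases "s \<ge> 1")
  case True
  have "(\<integral>\<^sup>+r. ennreal (indicator {1..} r * (2 / sqrt r)) *
      ennreal ((if r \<le> s then 1 else 0) * (h * (s * sqrt s))) \<partial>lborel)
      = (\<integral>\<^sup>+r. ennreal (indicator {1..s} r * (2 / sqrt r)) * ennreal (h * (s * sqrt s)) \<partial>lborel)"
    by (intro nn_integral_cong) (auto simp: indicator_def)
  also have "\<dots> = (\<integral>\<^sup>+r. ennreal (indicator {1..s} r * (2 / sqrt r)) \<partial>lborel) *
      ennreal (h * (s * sqrt s))"
    by (rule nn_integral_multc) measurable
  also have "\<dots> \<le> ennreal (4 * sqrt s) * ennreal (h * (s * sqrt s))"
    by (intro mult_right_mono nn_integral_inverse_sqrt_Icc_le True) simp
  also have "\<dots> = 4 * ennreal (indicator {1..} s * (h * s\<^sup>2))"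
    using True \<open>0 \<le> h\<close>
    by (simp add: ennreal_mult[symmetric] power2_eq_square mult_ac flip: ennreal_numeral)
  finally show ?thesis .
next
  case False
  then have zero: "ennreal (indicator {1..} r * (2 / sqrt r)) *
      ennreal ((if r \<le> s then 1 else 0) * (h * (s * sqrt s))) = 0" for r
    by (simp add: indicator_def)
  show ?thesis
    unfolding zero by simp
qed

lemma nn_integral_Hardy_kernel_le:
  fixes h :: "real \<Rightarrow> real"
  assumes [measurable]: "h \<in> borel_measurable borel" and h_nonneg: "\<And>s. 0 \<le> h s"
  shows "(\<integral>\<^sup>+r. ennreal (indicator {1..} r * (2 / sqrt r)) *
      (\<integral>\<^sup>+s. ennreal (indicator {r..} s * (h s * (s * sqrt s))) \<partial>lborel) \<partial>lborel)
    \<le> 4 * (\<integral>\<^sup>+s. ennreal (indicator {1..} s * (h s * s\<^sup>2)) \<partial>lborel)"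
proof -
  define F where "F = (\<lambda>r s. ennreal (indicator {1..} r * (2 / sqrt r)) *
      ennreal ((if r \<le> s then 1 else 0) * (h s * (s * sqrt s))))"
  have F_meas: "case_prod F \<in> borel_measurable (lborel \<Otimes>\<^sub>M lborel)"
    unfolding F_def by measurable
  have inner_r: "ennreal (indicator {1..} r * (2 / sqrt r)) *
      (\<integral>\<^sup>+s. ennreal (indicator {r..} s * (h s * (s * sqrt s))) \<partial>lborel) = (\<integral>\<^sup>+s. F r s \<partial>lborel)" for r
  proof -
    have "(\<integral>\<^sup>+s. ennreal (indicator {r..} s * (h s * (s * sqrt s))) \<partial>lborel) =
        (\<integral>\<^sup>+s. ennreal ((if r \<le> s then 1 else 0) * (h s * (s * sqrt s))) \<partial>lborel)"
      by (intro nn_integral_cong) (simp add: indicator_def)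
    then show ?thesis
      unfolding F_def by (simp add: nn_integral_cmult)
  qed
  have inner_s: "(\<integral>\<^sup>+r. F r s \<partial>lborel) \<le> 4 * ennreal (indicator {1..} s * (h s * s\<^sup>2))" for s
    unfolding F_def by (rule nn_integral_Hardy_kernel_slice_le[OF h_nonneg])
  have "(\<integral>\<^sup>+r. ennreal (indicator {1..} r * (2 / sqrt r)) *
      (\<integral>\<^sup>+s. ennreal (indicator {r..} s * (h s * (s * sqrt s))) \<partial>lborel) \<partial>lborel)
      = (\<integral>\<^sup>+r. \<integral>\<^sup>+s. F r s \<partial>lborel \<partial>lborel)"
    by (simp only: inner_r)
  also have "\<dots> = (\<integral>\<^sup>+s. \<integral>\<^sup>+r. F r s \<partial>lborel \<partial>lborel)"
    using lborel_pair.Fubini'[OF F_meas] by simp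
  also have "\<dots> \<le> (\<integral>\<^sup>+s. 4 * ennreal (indicator {1..} s * (h s * s\<^sup>2)) \<partial>lborel)"
    by (intro nn_integral_mono inner_s)
  also have "\<dots> = 4 * (\<integral>\<^sup>+s. ennreal (indicator {1..} s * (h s * s\<^sup>2)) \<partial>lborel)"
    by (rule nn_integral_cmult) measurable
  finally show ?thesis .
qed

lemma rad_H1_Hardy:
  assumes R: "rad_H1 {1..} u g"
  shows "(\<integral>\<^sup>+r. ennreal (indicator {1..} r * (u r)\<^sup>2) \<partial>lborel)
    \<le> 4 * (\<integral>\<^sup>+s. ennreal (indicator {1..} s * ((g s)\<^sup>2 * s\<^sup>2)) \<partial>lborel)"
proof -
  define h where "h = (\<lambda>s. (indicator {1..} s * g s)\<^sup>2)"
  have [measurable]: "(\<lambda>s. indicator {1..} s * g s) \<in> borel_measurable borel"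
    by (rule rad_H1_measurable_Ici[OF R]) simp
  then have [measurable]: "h \<in> borel_measurable borel"
    unfolding h_def by measurable
  have "(\<integral>\<^sup>+r. ennreal (indicator {1..} r * (u r)\<^sup>2) \<partial>lborel)
      \<le> (\<integral>\<^sup>+r. ennreal (indicator {1..} r * (2 / sqrt r)) *
        (\<integral>\<^sup>+s. ennreal (indicator {r..} s * (h s * (s * sqrt s))) \<partial>lborel) \<partial>lborel)"
  proof (intro nn_integral_mono)
    fix r :: real
    show "ennreal (indicator {1..} r * (u r)\<^sup>2) \<le> ennreal (indicator {1..} r * (2 / sqrt r)) *
        (\<integral>\<^sup>+s. ennreal (indicator {r..} s * (h s * (s * sqrt s))) \<partial>lborel)"
    proof (cases "r \<ge> 1")
      case True
      have "(\<integral>\<^sup>+s. ennreal (indicator {r..} s * (h s * (s * sqrt s))) \<partial>lborel) =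
          (\<integral>\<^sup>+s. ennreal (indicator {r..} s * ((g s)\<^sup>2 * (s * sqrt s))) \<partial>lborel)"
        using True by (intro nn_integral_cong) (auto simp: h_def indicator_def)
      then show ?thesis
        using rad_H1_sq_le_tail[OF R True] True by simp
    qed simp
  qed
  also have "\<dots> \<le> 4 * (\<integral>\<^sup>+s. ennreal (indicator {1..} s * (h s * s\<^sup>2)) \<partial>lborel)"
    by (rule nn_integral_Hardy_kernel_le) (simp_all add: h_def)
  also have "(\<integral>\<^sup>+s. ennreal (indicator {1..} s * (h s * s\<^sup>2)) \<partial>lborel) =
      (\<integral>\<^sup>+s. ennreal (indicator {1..} s * ((g s)\<^sup>2 * s\<^sup>2)) \<partial>lborel)"
    by (intro nn_integral_cong) (simp add: h_def indicator_def)
  finally show ?thesis .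
qed

lemma rad_H1_L6_le:
  assumes R: "rad_H1 {1..} u g" and "m \<ge> 0" and decay: "\<And>r. r \<ge> 1 \<Longrightarrow> sqrt r * \<bar>u r\<bar> \<le> m"
  shows "(LINT r:{1..}|lborel. \<bar>u r\<bar> ^ 6 * r\<^sup>2) \<le> 4 * m ^ 4 * (LINT r:{1..}|lborel. (g r)\<^sup>2 * r\<^sup>2)"
proof -
  define IU where "IU = (LINT r:{1..}|lborel. \<bar>u r\<bar> ^ 6 * r\<^sup>2)"
  define IG where "IG = (LINT r:{1..}|lborel. (g r)\<^sup>2 * r\<^sup>2)"
  have IU_eq: "(\<integral>\<^sup>+r. ennreal (indicator {1..} r * (\<bar>u r\<bar> ^ 6 * r\<^sup>2)) \<partial>lborel) = ennreal IU"
    and IG_eq: "(\<integral>\<^sup>+r. ennreal (indicator {1..} r * ((g r)\<^sup>2 * r\<^sup>2)) \<partial>lborel) = ennreal IG"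
    unfolding IU_def IG_def using R unfolding rad_H1_def by (auto intro!: nn_integral_eq_set_integral)
  have "IG \<ge> 0"
    unfolding IG_def by (rule set_lebesgue_integral_nonneg) simp
  have [measurable]: "(\<lambda>r. indicator {1..} r *\<^sub>R u r) \<in> borel_measurable borel"
    by (intro borel_measurable_continuous_on_indicator rad_H1_continuous_on[OF R]) simp
  have "(\<lambda>r. indicator {1..} r * (u r)\<^sup>2) = (\<lambda>r. (indicator {1..} r *\<^sub>R u r)\<^sup>2)"
    by (auto simp: indicator_def)
  then have [measurable]: "(\<lambda>r. indicator {1..} r * (u r)\<^sup>2) \<in> borel_measurable borel"
    by (simp only:) measurable
  have pointwise: "indicator {1..} r * (\<bar>u r\<bar> ^ 6 * r\<^sup>2) \<le> m ^ 4 * (indicator {1..} r * (u r)\<^sup>2)" for r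
  proof (cases "r \<ge> 1")
    case True
    have "\<bar>u r\<bar> ^ 6 * r\<^sup>2 = (sqrt r * \<bar>u r\<bar>) ^ 4 * (u r)\<^sup>2"
      using True by (simp add: power_mult_distrib flip: power_mult) (simp add: power2_eq_square eval_nat_numeral)
    also have "\<dots> \<le> m ^ 4 * (u r)\<^sup>2"
      using decay[OF True] True by (intro mult_right_mono power_mono) auto
    finally show ?thesis
      using True by simp
  qed simp
  have "ennreal IU \<le> (\<integral>\<^sup>+r. ennreal (m ^ 4) * ennreal (indicator {1..} r * (u r)\<^sup>2) \<partial>lborel)"
    unfolding IU_eq[symmetric] using pointwise \<open>m \<ge> 0\<close>
    by (intro nn_integral_mono) (simp add: ennreal_mult[symmetric] ennreal_leI)
  also have "\<dots> = ennreal (m ^ 4) * (\<integral>\<^sup>+r. ennreal (indicator {1..} r * (u r)\<^sup>2) \<partial>lborel)"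
    by (rule nn_integral_cmult) measurable
  also have "\<dots> \<le> ennreal (m ^ 4) * (4 * ennreal IG)"
    using rad_H1_Hardy[OF R] unfolding IG_eq by (intro mult_left_mono) auto
  also have "\<dots> = ennreal (4 * m ^ 4 * IG)"
    using \<open>m \<ge> 0\<close> \<open>IG \<ge> 0\<close> by (simp add: ennreal_mult mult_ac)
  finally show ?thesis
    unfolding IU_def[symmetric] IG_def[symmetric] using \<open>m \<ge> 0\<close> \<open>IG \<ge> 0\<close>
    by (subst (asm) ennreal_le_iff) auto
qed

lemma truncated_inverse_L6_density_le:
  fixes t r :: real
  assumes "t > 0" "r > 0"
  shows "\<bar>- 1 / max r t\<bar> ^ 6 * r\<^sup>2 \<le> indicator {0<..t} r / t ^ 4 + indicator {t..} r / r\<^sup>2 / t\<^sup>2"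
proof (cases "r \<le> t")
  case True
  have "\<bar>- 1 / max r t\<bar> ^ 6 * r\<^sup>2 = r\<^sup>2 / t ^ 6"
    using True \<open>t > 0\<close> by (simp add: max_def power_divide)
  also have "\<dots> \<le> t\<^sup>2 / t ^ 6"
    using True \<open>r > 0\<close> by (intro divide_right_mono power_mono) auto
  also have "\<dots> = 1 / t ^ 4"
    using \<open>t > 0\<close> by (simp add: field_simps eval_nat_numeral)
  finally have "\<bar>- 1 / max r t\<bar> ^ 6 * r\<^sup>2 \<le> 1 / t ^ 4" .
  moreover have "indicator {0<..t} r / t ^ 4 = 1 / t ^ 4"
    using True \<open>r > 0\<close> by simp
  moreover have "0 \<le> indicator {t..} r / r\<^sup>2 / t\<^sup>2"
    by simp
  ultimately show ?thesis
    by linarith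
next
  case False
  have "\<bar>- 1 / max r t\<bar> ^ 6 * r\<^sup>2 = 1 / r\<^sup>2 * (1 / r\<^sup>2)"
    using False \<open>t > 0\<close> by (simp add: max_def power_divide field_simps eval_nat_numeral)
  also have "\<dots> \<le> 1 / r\<^sup>2 * (1 / t\<^sup>2)"
    using False \<open>t > 0\<close> by (intro mult_left_mono divide_left_mono power_mono) auto
  finally show ?thesis
    using False by (simp add: indicator_def)
qed

lemma set_integrable_truncated_inverse_L6:
  fixes t :: real
  assumes "t > 0"
  shows "set_integrable lborel {0<..} (\<lambda>r. \<bar>- 1 / max r t\<bar> ^ 6 * r\<^sup>2)"
proof -
  let ?B = "\<lambda>r. indicator {0<..t} r / t ^ 4 + indicator {t..} r / r\<^sup>2 / t\<^sup>2"
  have "integrable lborel ?B"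
  proof (intro Bochner_Integration.integrable_add integrable_divide integrable_inverse_square_Ici[OF assms])
    show "integrable lborel (indicator {0<..t} :: real \<Rightarrow> real)"
      using assms by (simp add: integrable_indicator_iff)
  qed
  then show ?thesis
    unfolding set_integrable_def
  proof (rule Bochner_Integration.integrable_bound)
    show "AE r in lborel. norm (indicator {0<..} r *\<^sub>R (\<bar>- 1 / max r t\<bar> ^ 6 * r\<^sup>2)) \<le> norm (?B r)"
    proof (rule AE_I2)
      fix r :: real
      have "0 \<le> ?B r"
        by simp
      then have "indicator {0<..} r * (\<bar>- 1 / max r t\<bar> ^ 6 * r\<^sup>2) \<le> ?B r"
        using truncated_inverse_L6_density_le[OF assms, of r] by (cases "r > 0") simp_all
      then show "norm (indicator {0<..} r *\<^sub>R (\<bar>- 1 / max r t\<bar> ^ 6 * r\<^sup>2)) \<le> norm (?B r)"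
        by (simp add: abs_mult)
    qed
  qed simp
qed

lemma Hdot1_rad_truncated_inverse:
  assumes "t > 0"
  shows "Hdot1_rad (\<lambda>s. - 1 / max s t) (\<lambda>s. indicator {t..} s / s\<^sup>2)"
proof -
  let ?K = "\<lambda>s. indicator {t..} s / s\<^sup>2 :: real"
  have K: "integrable lborel ?K"
    by (rule integrable_inverse_square_Ici[OF \<open>t > 0\<close>])
  have FTC: "- 1 / max y t - - 1 / max x t = (LINT s:{x..y}|lborel. ?K s)" if "0 < x" "x \<le> y" for x y
  proof (cases "y < t")
    case True
    then have "(\<lambda>s. indicator {x..y} s *\<^sub>R ?K s) = (\<lambda>s. 0)"
      by (auto simp: indicator_def)
    then show ?thesis
      using True that by (simp add: set_lebesgue_integral_def)
  next
    case False
    have "(LINT s:{x..y}|lborel. ?K s) = (\<integral>s. 1 / s\<^sup>2 * indicator {max x t..y} s \<partial>lborel)"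
      unfolding set_lebesgue_integral_def
      by (rule Bochner_Integration.integral_cong) (auto simp: indicator_def)
    also have "\<dots> = - 1 / y - - 1 / max x t"
    proof (rule integral_FTC_Icc_nonneg)
      show "((\<lambda>x. - 1 / x) has_real_derivative 1 / s\<^sup>2) (at s)" if "s \<in> {max x t..y}" for s
        using that \<open>t > 0\<close> by (auto intro!: derivative_eq_intros simp: power2_eq_square)
    qed (use False that in auto)
    finally show ?thesis
      using False by simp
  qed
  have "(\<lambda>r. indicator {0<..} r *\<^sub>R ((?K r)\<^sup>2 * r\<^sup>2)) = ?K"
    using \<open>t > 0\<close> by (auto simp: indicator_def power2_eq_square)
  then have energy: "set_integrable lborel {0<..} (\<lambda>r. (?K r)\<^sup>2 * r\<^sup>2)"
    unfolding set_integrable_def using K by simp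
  have "set_integrable lborel {x..y} ?K" for x y
    unfolding set_integrable_def using K by (intro integrable_mult_indicator) auto
  then show ?thesis
    unfolding Hdot1_rad_def rad_H1_def
    using FTC set_integrable_truncated_inverse_L6[OF \<open>t > 0\<close>] energy by auto
qed

lemma weak_zero_Hdot1_pointwise:
  assumes W: "weak_zero_Hdot1 v" and "t > 0"
  shows "(\<lambda>n. v n t) \<longlonglongrightarrow> 0"
proof -
  obtain G where G: "\<And>n. Hdot1_rad (v n) (G n)"
    using W unfolding weak_zero_Hdot1_def by blast
  let ?K = "\<lambda>s. indicator {t..} s / s\<^sup>2 :: real"
  have lim: "(\<lambda>n. 4 * pi * (LINT r:{0<..}|lborel. G n r * ?K r * r\<^sup>2)) \<longlonglongrightarrow> 0"
    using W G Hdot1_rad_truncated_inverse[OF \<open>t > 0\<close>] unfolding weak_zero_Hdot1_def by blast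
  have eq: "(LINT r:{0<..}|lborel. G n r * ?K r * r\<^sup>2) = - v n t" for n
  proof -
    have "(LINT r:{0<..}|lborel. G n r * ?K r * r\<^sup>2) = (LINT r:{t..}|lborel. G n r)"
      unfolding set_lebesgue_integral_def
      by (rule Bochner_Integration.integral_cong) (use \<open>t > 0\<close> in \<open>auto simp: indicator_def\<close>)
    also have "\<dots> = - v n t"
      using rad_H1_eq_minus_integral_Ici[of "{0<..}" "v n" "G n" t] G[of n] \<open>t > 0\<close>
      unfolding Hdot1_rad_def by force
    finally show ?thesis .
  qed
  have "(\<lambda>n. (4 * pi) * - v n t) \<longlonglongrightarrow> (4 * pi) * - 0"
    using lim unfolding eq by simp
  then have "(\<lambda>n. - v n t) \<longlonglongrightarrow> - 0"
    by (subst (asm) tendsto_mult_left_iff) simp_all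
  then show ?thesis
    by (rule tendsto_minus_cancel)
qed

lemma sqrt_scaled_profile_tendsto_0_convergent:
  fixes f g :: "nat \<Rightarrow> real \<Rightarrow> real" and \<rho> :: "nat \<Rightarrow> real"
  assumes R: "\<And>n. rad_H1 {1..} (f n) (g n)"
    and energy: "\<And>n. (LINT r:{1..}|lborel. (g n r)\<^sup>2 * r\<^sup>2) \<le> B"
    and fixed_scale: "\<And>t. t \<ge> 1 \<Longrightarrow> (\<lambda>n. f n t) \<longlonglongrightarrow> 0"
    and \<rho>: "\<And>n. \<rho> n \<ge> 1"
    and "strict_mono \<tau>" and \<rho>_lim: "(\<lambda>k. \<rho> (\<tau> k)) \<longlonglongrightarrow> l"
  shows "(\<lambda>k. sqrt (\<rho> (\<tau> k)) * f (\<tau> k) (\<rho> (\<tau> k))) \<longlonglongrightarrow> 0"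
proof -
  have "l \<ge> 1"
    using \<rho> by (intro LIMSEQ_le_const[OF \<rho>_lim]) auto
  have at_l: "(\<lambda>k. f (\<tau> k) l) \<longlonglongrightarrow> 0"
    using LIMSEQ_subseq_LIMSEQ[OF fixed_scale[OF \<open>l \<ge> 1\<close>] \<open>strict_mono \<tau>\<close>] by (simp add: o_def)
  have "(\<lambda>k. f (\<tau> k) (\<rho> (\<tau> k)) - f (\<tau> k) l) \<longlonglongrightarrow> 0"
  proof (rule Lim_null_comparison)
    show "\<forall>\<^sub>F k in sequentially. norm (f (\<tau> k) (\<rho> (\<tau> k)) - f (\<tau> k) l) \<le> sqrt (B * \<bar>\<rho> (\<tau> k) - l\<bar>)"
    proof (intro always_eventually allI)
      fix k
      have "norm (f (\<tau> k) (\<rho> (\<tau> k)) - f (\<tau> k) l) \<le>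
          sqrt ((LINT r:{1..}|lborel. (g (\<tau> k) r)\<^sup>2 * r\<^sup>2) * \<bar>\<rho> (\<tau> k) - l\<bar>)"
        using rad_H1_Holder[OF R \<open>l \<ge> 1\<close> \<rho>] by simp
      also have "\<dots> \<le> sqrt (B * \<bar>\<rho> (\<tau> k) - l\<bar>)"
        using energy by (intro real_sqrt_le_mono mult_right_mono) auto
      finally show "norm (f (\<tau> k) (\<rho> (\<tau> k)) - f (\<tau> k) l) \<le> sqrt (B * \<bar>\<rho> (\<tau> k) - l\<bar>)" .
    qed
    have "(\<lambda>k. sqrt (B * \<bar>\<rho> (\<tau> k) - l\<bar>)) \<longlonglongrightarrow> sqrt (B * \<bar>l - l\<bar>)"
      by (intro tendsto_intros \<rho>_lim)
    then show "(\<lambda>k. sqrt (B * \<bar>\<rho> (\<tau> k) - l\<bar>)) \<longlonglongrightarrow> 0"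
      by simp
  qed
  from tendsto_add[OF this at_l] have "(\<lambda>k. f (\<tau> k) (\<rho> (\<tau> k))) \<longlonglongrightarrow> 0"
    by simp
  then have "(\<lambda>k. sqrt (\<rho> (\<tau> k)) * f (\<tau> k) (\<rho> (\<tau> k))) \<longlonglongrightarrow> sqrt l * 0"
    by (intro tendsto_mult tendsto_real_sqrt \<rho>_lim)
  then show ?thesis
    by simp
qed

lemma sqrt_scaled_profile_tendsto_0_escaping:
  fixes f :: "nat \<Rightarrow> real \<Rightarrow> real" and \<rho> :: "nat \<Rightarrow> real"
  assumes large_scale: "\<And>lam. (\<And>n. lam n \<ge> 1) \<Longrightarrow> filterlim lam at_top sequentially \<Longrightarrow>
        (\<lambda>n. sqrt (lam n) * f n (lam n)) \<longlonglongrightarrow> 0"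
    and \<rho>: "\<And>n. \<rho> n \<ge> 1"
    and "strict_mono \<tau>" and \<rho>_lim: "filterlim (\<lambda>k. \<rho> (\<tau> k)) at_top sequentially"
  shows "(\<lambda>k. sqrt (\<rho> (\<tau> k)) * f (\<tau> k) (\<rho> (\<tau> k))) \<longlonglongrightarrow> 0"
proof -
  define lam where "lam = (\<lambda>n. if n \<in> range \<tau> then \<rho> n else real n + 1)"
  have "filterlim lam at_top sequentially"
    unfolding lam_def
  proof (rule filterlim_at_top_subseq_extend[OF \<open>strict_mono \<tau>\<close> \<rho>_lim])
    show "filterlim (\<lambda>n. real n + 1) at_top sequentially"
      by (rule filterlim_at_top_mono[OF filterlim_real_sequentially]) simp
  qed
  moreover have "lam n \<ge> 1" for n
    using \<rho>[of n] by (simp add: lam_def)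
  ultimately have "(\<lambda>n. sqrt (lam n) * f n (lam n)) \<longlonglongrightarrow> 0"
    by (intro large_scale)
  from LIMSEQ_subseq_LIMSEQ[OF this \<open>strict_mono \<tau>\<close>] show ?thesis
    by (simp add: o_def lam_def)
qed

lemma sqrt_scaled_profile_tendsto_0:
  fixes f g :: "nat \<Rightarrow> real \<Rightarrow> real" and \<rho> :: "nat \<Rightarrow> real"
  assumes R: "\<And>n. rad_H1 {1..} (f n) (g n)"
    and energy: "\<And>n. (LINT r:{1..}|lborel. (g n r)\<^sup>2 * r\<^sup>2) \<le> B"
    and fixed_scale: "\<And>t. t \<ge> 1 \<Longrightarrow> (\<lambda>n. f n t) \<longlonglongrightarrow> 0"
    and large_scale: "\<And>lam. (\<And>n. lam n \<ge> 1) \<Longrightarrow> filterlim lam at_top sequentially \<Longrightarrow>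
        (\<lambda>n. sqrt (lam n) * f n (lam n)) \<longlonglongrightarrow> 0"
    and \<rho>: "\<And>n. \<rho> n \<ge> 1"
  shows "(\<lambda>n. sqrt (\<rho> n) * f n (\<rho> n)) \<longlonglongrightarrow> 0"
proof (rule LIMSEQ_if_subseqs_have_LIMSEQ_subseq)
  fix \<phi> :: "nat \<Rightarrow> nat"
  assume "strict_mono \<phi>"
  show "\<exists>\<psi>. strict_mono \<psi> \<and> (\<lambda>k. sqrt (\<rho> (\<phi> (\<psi> k))) * f (\<phi> (\<psi> k)) (\<rho> (\<phi> (\<psi> k)))) \<longlonglongrightarrow> 0"
  proof (rule subseq_tendsto_or_at_top[of 1 "\<lambda>k. \<rho> (\<phi> k)"])
    show "1 \<le> \<rho> (\<phi> n)" for n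
      by (rule \<rho>)
  next
    fix \<psi> l
    assume "strict_mono \<psi>" "(\<lambda>k. \<rho> (\<phi> (\<psi> k))) \<longlonglongrightarrow> l"
    moreover from this(1) have "strict_mono (\<lambda>k. \<phi> (\<psi> k))"
      using \<open>strict_mono \<phi>\<close> by (simp add: strict_mono_def)
    ultimately show ?thesis
      using sqrt_scaled_profile_tendsto_0_convergent[where \<rho> = \<rho>, OF R energy fixed_scale \<rho>] by blast
  next
    fix \<psi>
    assume "strict_mono \<psi>" "filterlim (\<lambda>k. \<rho> (\<phi> (\<psi> k))) at_top sequentially"
    moreover from this(1) have "strict_mono (\<lambda>k. \<phi> (\<psi> k))"
      using \<open>strict_mono \<phi>\<close> by (simp add: strict_mono_def)
    ultimately show ?thesis
      using sqrt_scaled_profile_tendsto_0_escaping[where \<rho> = \<rho>, OF large_scale \<rho>] by blast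
  qed
qed

lemma sqrt_scaled_profile_uniformly_small:
  fixes f :: "nat \<Rightarrow> real \<Rightarrow> real"
  assumes decay: "\<And>\<rho>. (\<And>n. \<rho> n \<ge> 1) \<Longrightarrow> (\<lambda>n. sqrt (\<rho> n) * f n (\<rho> n)) \<longlonglongrightarrow> 0"
    and "m > 0"
  shows "\<forall>\<^sub>F n in sequentially. \<forall>r\<ge>1. sqrt r * \<bar>f n r\<bar> \<le> m"
proof -
  define \<rho> where "\<rho> = (\<lambda>n. if \<exists>r\<ge>1. m < sqrt r * \<bar>f n r\<bar>
    then SOME r. r \<ge> 1 \<and> m < sqrt r * \<bar>f n r\<bar> else 1)"
  have \<rho>_ge: "\<rho> n \<ge> 1" for n
    unfolding \<rho>_def by (auto intro: someI2_ex)
  have \<rho>_large: "m < sqrt (\<rho> n) * \<bar>f n (\<rho> n)\<bar>" if "\<exists>r\<ge>1. m < sqrt r * \<bar>f n r\<bar>" for n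
    using that unfolding \<rho>_def by (auto intro: someI2_ex)
  have "\<forall>\<^sub>F n in sequentially. dist (sqrt (\<rho> n) * f n (\<rho> n)) 0 < m"
    by (rule tendstoD[OF decay[of \<rho>, OF \<rho>_ge] \<open>m > 0\<close>])
  then show ?thesis
  proof eventually_elim
    case (elim n)
    then have "sqrt (\<rho> n) * \<bar>f n (\<rho> n)\<bar> < m"
      using \<rho>_ge[of n] by (simp add: abs_mult)
    then have "\<not> (\<exists>r\<ge>1. m < sqrt r * \<bar>f n r\<bar>)"
      using \<rho>_large[of n] less_asym by blast
    then show ?case
      by (simp add: not_less)
  qed
qed

lemma L6_integral_tendsto_0:
  fixes f g :: "nat \<Rightarrow> real \<Rightarrow> real"
  assumes R: "\<And>n. rad_H1 {1..} (f n) (g n)"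
    and energy: "\<And>n. (LINT r:{1..}|lborel. (g n r)\<^sup>2 * r\<^sup>2) \<le> B"
    and decay: "\<And>\<rho>. (\<And>n. \<rho> n \<ge> 1) \<Longrightarrow> (\<lambda>n. sqrt (\<rho> n) * f n (\<rho> n)) \<longlonglongrightarrow> 0"
  shows "(\<lambda>n. LINT r:{1..}|lborel. \<bar>f n r\<bar> ^ 6 * r\<^sup>2) \<longlonglongrightarrow> 0"
proof -
  define I where "I = (\<lambda>n. LINT r:{1..}|lborel. \<bar>f n r\<bar> ^ 6 * r\<^sup>2)"
  have I_nonneg: "I n \<ge> 0" for n
    unfolding I_def by (rule set_lebesgue_integral_nonneg) simp
  have "B \<ge> 0"
    using energy[of 0] set_lebesgue_integral_nonneg[of "{1..}" "\<lambda>r. (g 0 r)\<^sup>2 * r\<^sup>2" lborel] by simp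
  show ?thesis
    unfolding I_def[symmetric]
  proof (rule order_tendstoI)
    show "\<forall>\<^sub>F n in sequentially. a < I n" if "a < 0" for a
      using that I_nonneg by (intro always_eventually allI) (auto intro: less_le_trans)
    show "\<forall>\<^sub>F n in sequentially. I n < e" if "0 < e" for e
    proof -
      define m where "m = root 4 (e / (4 * (B + 1)))"
      have "m > 0" and m4: "m ^ 4 = e / (4 * (B + 1))"
        using \<open>e > 0\<close> \<open>B \<ge> 0\<close> by (simp_all add: m_def)
      have small: "4 * m ^ 4 * B < e"
        using \<open>e > 0\<close> \<open>B \<ge> 0\<close> unfolding m4 by (simp add: field_simps)
      have I_le: "I n \<le> 4 * m ^ 4 * B" if "\<forall>r\<ge>1. sqrt r * \<bar>f n r\<bar> \<le> m" for n
      proof -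
        have "I n \<le> 4 * m ^ 4 * (LINT r:{1..}|lborel. (g n r)\<^sup>2 * r\<^sup>2)"
          unfolding I_def using \<open>m > 0\<close> that by (intro rad_H1_L6_le[OF R]) auto
        also have "\<dots> \<le> 4 * m ^ 4 * B"
          using energy[of n] by (intro mult_left_mono) auto
        finally show ?thesis .
      qed
      have "\<forall>\<^sub>F n in sequentially. \<forall>r\<ge>1. sqrt r * \<bar>f n r\<bar> \<le> m"
        by (rule sqrt_scaled_profile_uniformly_small[OF _ \<open>m > 0\<close>]) (rule decay)
      then show ?thesis
      proof eventually_elim
        case (elim n)
        then show ?case
          using I_le[OF elim] small by linarith
      qed
    qed
  qed
qed

lemma L6_ext_norm_tendsto_0:
  fixes f :: "nat \<Rightarrow> real \<Rightarrow> real"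
  assumes "(\<lambda>n. LINT r:{1..}|lborel. \<bar>f n r\<bar> ^ 6 * r\<^sup>2) \<longlonglongrightarrow> 0"
  shows "(\<lambda>n. L6_ext_norm (f n)) \<longlonglongrightarrow> 0"
proof -
  have "0 \<le> 4 * pi * (LINT r:{1..}|lborel. \<bar>f n r\<bar> ^ 6 * r\<^sup>2)" for n
    by (intro mult_nonneg_nonneg set_lebesgue_integral_nonneg) auto
  then have "(\<lambda>n. (4 * pi * (LINT r:{1..}|lborel. \<bar>f n r\<bar> ^ 6 * r\<^sup>2)) powr (1 / 6)) \<longlonglongrightarrow> 0"
    using assms by (intro tendsto_zero_powrI tendsto_mult_right_zero always_eventually allI) auto
  then show ?thesis
    by (simp add: L6_ext_norm_def)
qed

theorem lemma4p2:
  fixes f :: "nat \<Rightarrow> real \<Rightarrow> real"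
  assumes bounded: "\<exists>C. \<forall>n. \<exists>g. Hdot1_ext (f n) g \<and> Hdot1_ext_normsq g \<le> C"
    and weak: "\<And>lam :: nat \<Rightarrow> real.
       (\<forall>n. lam n > 0) \<Longrightarrow> (filterlim lam at_top sequentially \<or> (\<forall>n. lam n = 1)) \<Longrightarrow>
       weak_zero_Hdot1 (\<lambda>n r. sqrt (lam n) * ext_P (f n) (lam n * r))"
  shows "\<exists>s. strict_mono s \<and> (\<lambda>k. L6_ext_norm (f (s k))) \<longlonglongrightarrow> 0"
proof -
  obtain C g where R: "\<And>n. rad_H1 {1..} (f n) (g n)" and C: "\<And>n. Hdot1_ext_normsq (g n) \<le> C"
    using bounded unfolding Hdot1_ext_def by metis
  have energy: "(LINT r:{1..}|lborel. (g n r)\<^sup>2 * r\<^sup>2) \<le> C / (4 * pi)" for n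
    using C[of n] by (simp add: Hdot1_ext_normsq_def field_simps)
  have fixed_scale: "(\<lambda>n. f n t) \<longlonglongrightarrow> 0" if "t \<ge> 1" for t
    using weak_zero_Hdot1_pointwise[OF weak[of "\<lambda>_. 1"], of t] that by (simp add: ext_P_def)
  have large_scale: "(\<lambda>n. sqrt (lam n) * f n (lam n)) \<longlonglongrightarrow> 0"
    if "\<And>n. lam n \<ge> 1" "filterlim lam at_top sequentially" for lam
  proof -
    have "\<forall>n. lam n > 0"
      using that(1) by (auto intro: less_le_trans[of 0 1])
    then show ?thesis
      using weak_zero_Hdot1_pointwise[OF weak[of lam], of 1] that by (simp add: ext_P_def)
  qed
  have "(\<lambda>n. L6_ext_norm (f n)) \<longlonglongrightarrow> 0"
    using L6_ext_norm_tendsto_0[OF L6_integral_tendsto_0[OF R energy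
        sqrt_scaled_profile_tendsto_0[OF R energy fixed_scale large_scale]]] .
  then show ?thesis
    using strict_mono_id by (intro exI[of _ id]) simp
qed

end
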